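(* Let $(\mathcal{G}(u_0,v_0),-\Omega^2\,du\,dv)$ with radial function $r$ and stress-energy components $T_{uu},T_{uv},T_{vv}$ be as described in the context, satisfying assumptions (I)–(VII). Suppose there exists $\delta>0$ such that, with $\mathcal{W}=\mathcal{W}(\delta)$, condition (A), namely $T_{uv}\Omega^{-2}<\frac{1}{4r^2}$, holds at every point of $\mathcal{A}\cap\mathcal{W}$. If $\mathcal{G}(u_0,v_0)$ does not contain a marginally trapped tube which is asymptotic to the event horizon, then $\mathcal{W}\cap\mathcal{R}$ contains a rectangle $K(u_1,v_1)=[0,u_1]\times[v_1,\infty)$ for some $u_1\in(0,u_0]$, $v_1\in[v_0,\infty)$.
   Context: Fix double null coordinates $(u,v)$ on $\mathbb{R}^2$ with Minkowski metric $-du\,dv$, time-oriented so that $u$ and $v$ increase toward the future. For $u,v>0$ let $K(u,v)=[0,u]\times[v,\infty)$. Fix $u_0,v_0>0$, $\mathcal{C}_{in}=[0,u_0]\times\{v_0\}$, $\mathcal{C}_{out}=\{0\}\times[v_0,\infty)$; causal notions $J^\pm,I^\pm$ refer to $K(u_0,v_0)$. Let $\mathcal{G}(u_0,v_0)\subset K(u_0,v_0)$ be a globally hyperbolic, relatively open subset containing $\mathcal{C}_{in}\cup\mathcal{C}_{out}$, with metric $-\Omega^2du\,dv$ ($\Omega>0$ smooth), smooth radial function $r\ge0$ with $r>0$ on $\mathcal{C}_{in}\cup\mathcal{C}_{out}$, and smooth functions $T_{uu},T_{uv},T_{vv}$ (components of the stress-energy tensor of the spherically symmetric spacetime $-\Omega^2du\,dv+r^2g_{S^2}$)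 such that $\partial_u(\Omega^{-2}\partial_u r)=-r\Omega^{-2}T_{uu}$, $\partial_v(\Omega^{-2}\partial_v r)=-r\Omega^{-2}T_{vv}$, $\partial_u m=2r^2\Omega^{-2}(T_{uv}\partial_u r-T_{uu}\partial_v r)$, $\partial_v m=2r^2\Omega^{-2}(T_{uv}\partial_v r-T_{vv}\partial_u r)$, with Hawking mass $m=\frac r2(1+4\Omega^{-2}\partial_u r\partial_v r)$. Define $\mathcal{R}=\{\partial_v r>0,\partial_u r<0\}$, $\mathcal{T}=\{\partial_v r<0,\partial_u r<0\}$, $\mathcal{A}=\{\partial_v r=0,\partial_u r<0\}$ (the marginally trapped tube), $r_+=\sup_{\mathcal{C}_{out}}r$, $m_+=\sup_{\mathcal{C}_{out}}m$, and for $\delta>0$, $\mathcal{W}(\delta)=\{(u,v)\in\mathcal{G}(u_0,v_0): r(u,v)\ge r_+-\delta\}$. Assumptions: (I) $T_{uu},T_{uv},T_{vv}\ge0$; (II) $J^-(\mathcal{G}(u_0,v_0))\subset\mathcal{G}(u_0,v_0)$; (III) $r\le r_+<\infty$ along $\mathcal{C}_{out}$; (IV) $0\le m\le m_+<\infty$ along $\mathcal{C}_{out}$; (V) $\partial_u r<0$ along $\mathcal{C}_{out}$; (VI) $\partial_v r>0$ along $\mathcal{C}_{out}$; (VII) (closures in $K(u_0,v_0)$) if $p\in\overline{\mathcal{R}}$, $q\in\overline{\mathcal{R}}\cap I^-(p)$ and $J^-(p)\cap J^+(q)\setminus\{p\}\subset\mathcal{R}\cup\mathcal{A}$, then $p\in\mathcal{R}\cup\mathcal{A}$.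 The curve $\mathcal{C}_{out}$ is regarded as the event horizon, and $i^+$ denotes the point $(0,\infty)$ of $\overline{K}(u_0,v_0)=[0,u_0]\times[v_0,\infty]$. A marginally trapped tube (portion of $\mathcal{A}$) is asymptotic to the event horizon if it has $i^+$ as a limit point in $\overline{K}(u_0,v_0)$, i.e. for every sufficiently small $u>0$ there is $v>v_0$ with $(u,v)$ in it. *)

theory Defs
  imports "HOL-Analysis.Analysis"
begin

text \<open>Points of the quotient (u,v)-plane are pairs (u,v) :: real \<times> real.\<close>

definition Kset :: "real \<Rightarrow> real \<Rightarrow> (real \<times> real) set" where
  "Kset u v = {0..u} \<times> {v..}"

text \<open>Causal notions in K(u0,v0) for the metric -du dv (u, v increasing to the future).\<close>
definition Jminus :: "(real \<times> real) set \<Rightarrow> real \<times> real \<Rightarrow> (real \<times> real) set" where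
  "Jminus K p = {q \<in> K. fst q \<le> fst p \<and> snd q \<le> snd p}"
definition Jplus :: "(real \<times> real) set \<Rightarrow> real \<times> real \<Rightarrow> (real \<times> real) set" where
  "Jplus K p = {q \<in> K. fst p \<le> fst q \<and> snd p \<le> snd q}"
definition Iminus :: "(real \<times> real) set \<Rightarrow> real \<times> real \<Rightarrow> (real \<times> real) set" where
  "Iminus K p = {q \<in> K. fst q < fst p \<and> snd q < snd p}"
definition Jminus_set :: "(real \<times> real) set \<Rightarrow> (real \<times> real) set \<Rightarrow> (real \<times> real) set" where
  "Jminus_set K S = (\<Union>p\<in>S. Jminus K p)"

definition closure_in :: "(real \<times> real) set \<Rightarrow> (real \<times> real) set \<Rightarrow> (real \<times> real) set" where
  "closure_in K S = K \<inter> closure S"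

text \<open>Causal curves in G (conformally flat metric -\<Omega>^2 du dv): continuous curves with
  nondecreasing null coordinates; global hyperbolicity: compact causal diamonds.\<close>
definition causal_curve :: "(real \<times> real) set \<Rightarrow> (real \<Rightarrow> real \<times> real) \<Rightarrow> bool" where
  "causal_curve G \<gamma> \<longleftrightarrow> continuous_on {0..1} \<gamma> \<and> \<gamma> ` {0..1} \<subseteq> G \<and>
     mono_on {0..1} (fst \<circ> \<gamma>) \<and> mono_on {0..1} (snd \<circ> \<gamma>)"

definition causal_diamond :: "(real \<times> real) set \<Rightarrow> real \<times> real \<Rightarrow> real \<times> real \<Rightarrow> (real \<times> real) set" where
  "causal_diamond G p q = {x. \<exists>\<gamma>. causal_curve G \<gamma> \<and> \<gamma> 0 = p \<and> \<gamma> 1 = q \<and> x \<in> \<gamma> ` {0..1}}"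

definition globally_hyperbolic :: "(real \<times> real) set \<Rightarrow> bool" where
  "globally_hyperbolic G \<longleftrightarrow> (\<forall>p\<in>G. \<forall>q\<in>G. compact (causal_diamond G p q))"

definition pu :: "(real \<times> real \<Rightarrow> real) \<Rightarrow> real \<times> real \<Rightarrow> real" where
  "pu f p = deriv (\<lambda>s. f (s, snd p)) (fst p)"
definition pv :: "(real \<times> real \<Rightarrow> real) \<Rightarrow> real \<times> real \<Rightarrow> real" where
  "pv f p = deriv (\<lambda>s. f (fst p, s)) (snd p)"

fun iter_partial :: "bool list \<Rightarrow> (real \<times> real \<Rightarrow> real) \<Rightarrow> real \<times> real \<Rightarrow> real" where
  "iter_partial [] f = f"
| "iter_partial (b # ds) f = (if b then pu else pv) (iter_partial ds f)"

definition smooth_on :: "(real \<times> real) set \<Rightarrow> (real \<times> real \<Rightarrow> real) \<Rightarrow> bool" where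
  "smooth_on S f \<longleftrightarrow> (\<exists>U. open U \<and> S \<subseteq> U \<and>
      (\<forall>ds. \<forall>p\<in>U. iter_partial ds f differentiable (at p)))"

definition hawking_mass :: "(real \<times> real \<Rightarrow> real) \<Rightarrow> (real \<times> real \<Rightarrow> real) \<Rightarrow> real \<times> real \<Rightarrow> real" where
  "hawking_mass \<Omega> r p = r p / 2 * (1 + 4 * pu r p * pv r p / (\<Omega> p)\<^sup>2)"

end

theory Submission
  imports Defs
begin

(* Raychaudhuri's equation in u, with T_uu >= 0 and r_u < 0 on the event horizon, propagates
   r_u < 0 to the whole past-closed domain, so R is the relatively open set where r_v > 0.
   Near a horizon point (0, v1) with r(0, v1) > sup r - delta, choose u1 so small that
   [0, u1] x {v1} lies in R with r > sup r - delta there, and the line u = u1 meets no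
   marginally trapped point. The rectangle [0, u1] x [v1, v] then moves up in v: openness pushes
   it forward, and if its top edge left R at a first point p, then p would be a limit of R whose
   causal diamond lies in R, so p is in A by (VII), and in W because r decreases in u and
   increases in v. At p the u-derivative of the mass equation and condition (A) give r_uv < 0,
   so r_v < 0 just below and to the right of p, inside the rectangle. *)

lemma iter_partial_append: "iter_partial (ds @ es) f = iter_partial ds (iter_partial es f)"
  by (induction ds) simp_all

lemma smooth_on_pu:
  assumes "smooth_on G f"
  shows "smooth_on G (pu f)"
proof -
  obtain U where "open U" "G \<subseteq> U" and U: "\<forall>ds. \<forall>p\<in>U. iter_partial ds f differentiable (at p)"
    using assms unfolding smooth_on_def by blast
  have "iter_partial ds (pu f) = iter_partial (ds @ [True]) f" for ds
    by (simp add: iter_partial_append)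
  then show ?thesis
    unfolding smooth_on_def using \<open>open U\<close> \<open>G \<subseteq> U\<close> U by (intro exI[of _ U]) auto
qed

lemma smooth_on_pv:
  assumes "smooth_on G f"
  shows "smooth_on G (pv f)"
proof -
  obtain U where "open U" "G \<subseteq> U" and U: "\<forall>ds. \<forall>p\<in>U. iter_partial ds f differentiable (at p)"
    using assms unfolding smooth_on_def by blast
  have "iter_partial ds (pv f) = iter_partial (ds @ [False]) f" for ds
    by (simp add: iter_partial_append)
  then show ?thesis
    unfolding smooth_on_def using \<open>open U\<close> \<open>G \<subseteq> U\<close> U by (intro exI[of _ U]) auto
qed

lemma smooth_on_differentiable:
  assumes "smooth_on G f" "p \<in> G"
  shows "f differentiable (at p)"
proof -
  have "iter_partial [] f differentiable (at p)"
    using assms unfolding smooth_on_def by blast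
  then show ?thesis by simp
qed

lemma smooth_on_continuous_on: "smooth_on G f \<Longrightarrow> continuous_on G f"
  using smooth_on_differentiable
  by (blast intro: continuous_at_imp_continuous_on differentiable_imp_continuous_within)

lemma has_real_derivative_pu:
  assumes "f differentiable (at (u, v))"
  shows "((\<lambda>s. f (s, v)) has_real_derivative pu f (u, v)) (at u)"
proof -
  have "(f \<circ> (\<lambda>s. (s, v))) differentiable (at u)"
    using assms by (intro differentiable_chain_at) simp_all
  then show ?thesis
    unfolding pu_def by (simp add: o_def DERIV_deriv_iff_real_differentiable)
qed

lemma has_real_derivative_pv:
  assumes "f differentiable (at (u, v))"
  shows "((\<lambda>s. f (u, s)) has_real_derivative pv f (u, v)) (at v)"
proof -
  have "(f \<circ> (\<lambda>s. (u, s))) differentiable (at v)"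
    using assms by (intro differentiable_chain_at) simp_all
  then show ?thesis
    unfolding pv_def by (simp add: o_def DERIV_deriv_iff_real_differentiable)
qed

lemma le_by_signs_of_partials:
  fixes f :: "real \<times> real \<Rightarrow> real"
  assumes "u \<le> u1" "v1 \<le> v"
    and pu_nonpos: "\<forall>s\<in>{u..u1}. f differentiable (at (s, v1)) \<and> pu f (s, v1) \<le> 0"
    and pv_nonneg: "\<forall>t\<in>{v1..v}. f differentiable (at (u, t)) \<and> pv f (u, t) \<ge> 0"
  shows "f (u1, v1) \<le> f (u, v)"
proof -
  have "f (u1, v1) \<le> f (u, v1)"
  proof (rule DERIV_nonpos_imp_nonincreasing[OF \<open>u \<le> u1\<close>])
    fix s assume "u \<le> s" "s \<le> u1"
    then show "\<exists>y. ((\<lambda>s. f (s, v1)) has_real_derivative y) (at s) \<and> y \<le> 0"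
      using pu_nonpos has_real_derivative_pu by fastforce
  qed
  also have "\<dots> \<le> f (u, v)"
  proof (rule DERIV_nonneg_imp_nondecreasing[OF \<open>v1 \<le> v\<close>])
    fix t assume "v1 \<le> t" "t \<le> v"
    then show "\<exists>y. ((\<lambda>t. f (u, t)) has_real_derivative y) (at t) \<and> y \<ge> 0"
      using pv_nonneg has_real_derivative_pv by fastforce
  qed
  finally show ?thesis .
qed

lemma neg_below_zero_with_neg_pu:
  fixes f :: "real \<times> real \<Rightarrow> real"
  assumes "smooth_on G f" "(u, v) \<in> G" "f (u, v) = 0" "pu f (u, v) < 0" "u < u1" "v1 < v"
  obtains s w where "u < s" "s < u1" "v1 < w" "w < v" "f (s, w) < 0"
proof -
  obtain V where "open V" "G \<subseteq> V" and "\<forall>x\<in>V. iter_partial [] f differentiable (at x)"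
    using assms(1) unfolding smooth_on_def by blast
  then have diff: "\<forall>x\<in>V. f differentiable (at x)" and "(u, v) \<in> V"
    using assms(2) by auto
  define \<epsilon> where "\<epsilon> = min (u1 - u) (v - v1)"
  have "\<epsilon> > 0" using assms(5,6) by (simp add: \<epsilon>_def)
  have "((\<lambda>s. f (s, v)) has_real_derivative pu f (u, v)) (at u)"
    using diff \<open>(u, v) \<in> V\<close> by (intro has_real_derivative_pu) blast
  then obtain d where "d > 0" and dec: "\<And>h. 0 < h \<Longrightarrow> h < d \<Longrightarrow> f (u + h, v) < 0"
    using DERIV_neg_dec_right[of _ _ u] \<open>pu f (u, v) < 0\<close> \<open>f (u, v) = 0\<close> by metis
  obtain e where "e > 0" "ball (u, v) e \<subseteq> V" using \<open>open V\<close> \<open>(u, v) \<in> V\<close> open_contains_ball by blast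
  define h where "h = min d (min e \<epsilon>) / 2"
  have h: "0 < h" "h < d" "h < e" "h < \<epsilon>"
    using \<open>d > 0\<close> \<open>e > 0\<close> \<open>\<epsilon> > 0\<close> by (auto simp: h_def)
  have "(u + h, v) \<in> V"
    using h \<open>ball (u, v) e \<subseteq> V\<close> by (auto simp: dist_Pair_Pair dist_real_def)
  then have "isCont f (u + h, v)" using diff differentiable_imp_continuous_within by blast
  moreover have "f (u + h, v) < 0" using dec h by simp
  ultimately have "\<forall>\<^sub>F y in at (u + h, v). f y < 0"
    by (simp add: isCont_def order_tendstoD(2))
  then obtain e' where "e' > 0" and neg: "\<And>y. y \<noteq> (u + h, v) \<Longrightarrow> dist y (u + h, v) < e' \<Longrightarrow> f y < 0"
    unfolding eventually_at by blast
  define k where "k = min e' \<epsilon> / 2"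
  have k: "0 < k" "k < e'" "k < \<epsilon>" using \<open>e' > 0\<close> \<open>\<epsilon> > 0\<close> by (auto simp: k_def)
  have "f (u + h, v - k) < 0"
    using neg[of "(u + h, v - k)"] k by (simp add: dist_Pair_Pair dist_real_def)
  then show ?thesis using that[of "u + h" "v - k"] h k by (simp add: \<epsilon>_def)
qed

lemma real_induct_upward:
  fixes P :: "real \<Rightarrow> bool"
  assumes start: "P a"
    and step: "\<And>x. a \<le> x \<Longrightarrow> P x \<Longrightarrow> \<exists>y>x. \<forall>z\<in>{x..y}. P z"
    and limit: "\<And>x. a < x \<Longrightarrow> \<forall>y\<in>{a..<x}. P y \<Longrightarrow> P x"
    and "a \<le> x"
  shows "P x"
proof (rule ccontr)
  assume "\<not> P x"
  define S where "S = {y. a \<le> y \<and> (\<forall>z\<in>{a..y}. P z)}"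
  have "a \<in> S" using start by (auto simp: S_def)
  have bdd: "bdd_above S"
    using \<open>\<not> P x\<close> \<open>a \<le> x\<close> by (intro bdd_aboveI[of _ x]) (force simp: S_def)
  define s where "s = Sup S"
  have "a \<le> s" unfolding s_def using \<open>a \<in> S\<close> bdd by (rule cSup_upper)
  have below: "\<forall>y\<in>{a..<s}. P y"
  proof
    fix y assume "y \<in> {a..<s}"
    then obtain z where "z \<in> S" "y < z"
      using less_cSup_iff[of S y] \<open>a \<in> S\<close> bdd by (auto simp: s_def)
    then show "P y" using \<open>y \<in> {a..<s}\<close> by (auto simp: S_def)
  qed
  have "P s"
    using start limit[of s] below \<open>a \<le> s\<close> by (cases "a = s") auto
  then obtain y where "y > s" "\<forall>z\<in>{s..y}. P z" using step \<open>a \<le> s\<close> by blast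
  then have "y \<in> S" using below \<open>a \<le> s\<close> by (force simp: S_def)
  then show False using \<open>y > s\<close> bdd by (simp add: s_def cSup_upper leD)
qed

lemma openin_superlevel_set:
  fixes f :: "'a::topological_space \<Rightarrow> real"
  assumes "openin (top_of_set K) G" "continuous_on G f"
  shows "openin (top_of_set K) {p \<in> G. c < f p}"
proof -
  have "openin (top_of_set G) (G \<inter> f -` {c<..})"
    using assms(2) by (rule continuous_openin_preimage_gen) simp
  then show ?thesis using assms(1) by (auto elim: openin_trans simp: Int_def)
qed

lemma openin_first_exit_on_segment:
  fixes U K :: "(real \<times> real) set"
  assumes U: "openin (top_of_set K) U" and "{a..b} \<times> {v} \<subseteq> K"
    and "(a, v) \<in> U" and "\<not> {a..b} \<times> {v} \<subseteq> U"
  obtains c where "a < c" "c \<le> b" "(c, v) \<notin> U" "{a..<c} \<times> {v} \<subseteq> U"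
proof -
  obtain T where "open T" and U_eq: "U = K \<inter> T" using U openin_open by blast
  define E where "E = {a..b} \<inter> (\<lambda>x. (x, v)) -` (- T)"
  have E_eq: "E = {x\<in>{a..b}. (x, v) \<notin> U}" using assms(2) unfolding E_def U_eq by blast
  have "E \<noteq> {}" using assms(4) by (auto simp: E_eq)
  moreover have "bdd_below E" by (auto simp: E_def)
  moreover have "closed E"
    unfolding E_def using \<open>open T\<close> by (intro closed_Int closed_vimage) (auto intro: continuous_intros)
  ultimately have "Inf E \<in> E" by (rule closed_contains_Inf)
  moreover have "{a..<Inf E} \<times> {v} \<subseteq> U"
  proof clarify
    fix x assume "x \<in> {a..<Inf E}"
    then have "x \<notin> E" using \<open>bdd_below E\<close> by (auto dest: cInf_lower)
    then show "(x, v) \<in> U" using \<open>x \<in> {a..<Inf E}\<close> \<open>Inf E \<in> E\<close> by (auto simp: E_eq)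
  qed
  moreover have "a \<noteq> Inf E" using \<open>Inf E \<in> E\<close> assms(3) by (auto simp: E_eq)
  ultimately show ?thesis using that by (force simp: E_eq)
qed

lemma openin_contains_strip_above_segment:
  fixes U K :: "(real \<times> real) set"
  assumes U: "openin (top_of_set K) U" and seg: "{a..b} \<times> {v} \<subseteq> U"
  obtains \<eta> where "\<eta> > 0" "K \<inter> {a..b} \<times> {v..v + \<eta>} \<subseteq> U"
proof -
  obtain T where "open T" and U_eq: "U = K \<inter> T" using U openin_open by blast
  have "compact ({a..b} \<times> {v})" by (intro compact_Times compact_Icc compact_sing)
  moreover have "({a..b} \<times> {v}) \<inter> - T = {}" using seg U_eq by blast
  ultimately obtain d where "d > 0" and d: "\<forall>x\<in>{a..b} \<times> {v}. \<forall>y\<in>- T. d \<le> dist x y"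
    using separate_compact_closed[of _ "- T"] \<open>open T\<close> by blast
  have "K \<inter> {a..b} \<times> {v..v + d/2} \<subseteq> U"
  proof clarify
    fix u w assume uw: "(u, w) \<in> K" "u \<in> {a..b}" "w \<in> {v..v + d/2}"
    have "dist (u, v) (u, w) < d" using uw \<open>d > 0\<close> by (simp add: dist_Pair_Pair dist_real_def)
    moreover have "(u, v) \<in> {a..b} \<times> {v}" using uw(2) by simp
    ultimately have "(u, w) \<in> T" using d by (meson ComplI not_le)
    then show "(u, w) \<in> U" using uw(1) U_eq by blast
  qed
  then show ?thesis using that \<open>d > 0\<close> by (meson half_gt_zero)
qed

lemma openin_segment_near_axis:
  fixes U :: "(real \<times> real) set"
  assumes U: "openin (top_of_set (Kset u0 v0)) U" and "(0, v) \<in> U" "0 < u0"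
    and not_eventually: "\<not> (\<exists>\<epsilon>>0. \<forall>u. 0 < u \<and> u < \<epsilon> \<longrightarrow> P u)"
  obtains u1 where "0 < u1" "u1 \<le> u0" "{0..u1} \<times> {v} \<subseteq> U" "\<not> P u1"
proof -
  obtain e where "e > 0" and e: "ball (0, v) e \<inter> Kset u0 v0 \<subseteq> U"
    using U \<open>(0, v) \<in> U\<close> by (meson openin_contains_ball)
  have "v0 \<le> v" using openin_subset[OF U] \<open>(0, v) \<in> U\<close> by (auto simp: Kset_def)
  have "min e u0 > 0" using \<open>e > 0\<close> \<open>0 < u0\<close> by simp
  then obtain u1 where "0 < u1" "u1 < min e u0" "\<not> P u1"
    using not_eventually by blast
  moreover have "{0..u1} \<times> {v} \<subseteq> ball (0, v) e \<inter> Kset u0 v0"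
    using \<open>u1 < min e u0\<close> \<open>v0 \<le> v\<close> by (auto simp: Kset_def dist_Pair_Pair dist_real_def)
  then have "{0..u1} \<times> {v} \<subseteq> U" using e by blast
  ultimately show ?thesis using that by simp
qed

lemma top_edge_in_regular_region:
  fixes u0 v0 u1 v1 vs :: real and R A :: "(real \<times> real) set"
  defines "K \<equiv> Kset u0 v0"
  assumes R_open: "openin (top_of_set K) R"
    and VII: "\<forall>p q. p \<in> closure_in K R \<longrightarrow> q \<in> closure_in K R \<inter> Iminus K p \<longrightarrow>
                 Jminus K p \<inter> Jplus K q - {p} \<subseteq> R \<union> A \<longrightarrow> p \<in> R \<union> A"
    and "u1 \<le> u0" "v0 \<le> v1" "v1 < vs"
    and below: "{0..u1} \<times> {v1..<vs} \<subseteq> R"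
    and axis: "(0, vs) \<in> R"
    and no_A: "\<And>u. 0 < u \<Longrightarrow> u \<le> u1 \<Longrightarrow> (u, vs) \<notin> A"
  shows "{0..u1} \<times> {vs} \<subseteq> R"
proof (rule ccontr)
  assume "\<not> ?thesis"
  moreover have "{0..u1} \<times> {vs} \<subseteq> K" using assms(4-6) by (auto simp: K_def Kset_def)
  ultimately obtain c where c: "0 < c" "c \<le> u1" "(c, vs) \<notin> R" "{0..<c} \<times> {vs} \<subseteq> R"
    using openin_first_exit_on_segment[OF R_open _ axis] by blast
  have "(c, vs) \<in> closure ({c} \<times> {v1..<vs})"
    using \<open>v1 < vs\<close> by (simp add: closure_Times)
  also have "\<dots> \<subseteq> closure R"
    using below c(2) \<open>0 < c\<close> by (intro closure_mono) auto
  finally have "(c, vs) \<in> closure_in K R"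
    using c assms(4-6) by (auto simp: closure_in_def K_def Kset_def)
  moreover have "(0, v1) \<in> R" using below c(1,2) \<open>v1 < vs\<close> by auto
  then have "(0, v1) \<in> closure_in K R \<inter> Iminus K (c, vs)"
    using closure_subset[of R] c(1,2) assms(4-6)
    by (auto simp: closure_in_def Iminus_def K_def Kset_def)
  moreover have "Jminus K (c, vs) \<inter> Jplus K (0, v1) - {(c, vs)} \<subseteq> R"
  proof
    fix x assume x: "x \<in> Jminus K (c, vs) \<inter> Jplus K (0, v1) - {(c, vs)}"
    then have "x \<in> {0..u1} \<times> {v1..<vs} \<union> {0..<c} \<times> {vs}"
      using c(2) by (cases x) (auto simp: Jminus_def Jplus_def)
    then show "x \<in> R" using below c(4) by blast
  qed
  ultimately have "(c, vs) \<in> A" using VII c(3) by blast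
  then show False using no_A c by blast
qed

lemma rectangle_in_regular_region:
  fixes u0 v0 u1 v1 :: real and R A :: "(real \<times> real) set"
  defines "K \<equiv> Kset u0 v0"
  assumes R_open: "openin (top_of_set K) R"
    and VII: "\<forall>p q. p \<in> closure_in K R \<longrightarrow> q \<in> closure_in K R \<inter> Iminus K p \<longrightarrow>
                 Jminus K p \<inter> Jplus K q - {p} \<subseteq> R \<union> A \<longrightarrow> p \<in> R \<union> A"
    and "u1 \<le> u0" "v0 \<le> v1"
    and start: "{0..u1} \<times> {v1} \<subseteq> R" and axis: "{0} \<times> {v1..} \<subseteq> R"
    and no_A: "\<And>u v. 0 < u \<Longrightarrow> u \<le> u1 \<Longrightarrow> v1 < v \<Longrightarrow> {0..u1} \<times> {v1..<v} \<subseteq> R \<Longrightarrow>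
        (u, v) \<notin> A"
  shows "{0..u1} \<times> {v1..} \<subseteq> R"
proof -
  have "{0..u1} \<times> {v} \<subseteq> R" if "v1 \<le> v" for v
    using start _ _ that
  proof (rule real_induct_upward[where P = "\<lambda>v. {0..u1} \<times> {v} \<subseteq> R"])
    fix v assume "v1 \<le> v" "{0..u1} \<times> {v} \<subseteq> R"
    then obtain \<eta> where "\<eta> > 0" "K \<inter> {0..u1} \<times> {v..v + \<eta>} \<subseteq> R"
      using openin_contains_strip_above_segment[OF R_open] by blast
    moreover have "{0..u1} \<times> {v..v + \<eta>} \<subseteq> K"
      using \<open>v1 \<le> v\<close> assms(4,5) by (auto simp: K_def Kset_def)
    ultimately show "\<exists>y>v. \<forall>z\<in>{v..y}. {0..u1} \<times> {z} \<subseteq> R"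
      by (intro exI[of _ "v + \<eta>"]) auto
  next
    fix v assume "v1 < v" "\<forall>y\<in>{v1..<v}. {0..u1} \<times> {y} \<subseteq> R"
    then have below: "{0..u1} \<times> {v1..<v} \<subseteq> R" by auto
    show "{0..u1} \<times> {v} \<subseteq> R"
      using R_open VII assms(4,5) \<open>v1 < v\<close> below
    proof (rule top_edge_in_regular_region[of u0 v0 R A u1 v1 v, folded K_def])
      show "(0, v) \<in> R" using axis \<open>v1 < v\<close> by auto
    qed (use no_A below \<open>v1 < v\<close> in blast)
  qed
  then show ?thesis by auto
qed

lemma pu_neg_along_segment:
  fixes r \<Omega> :: "real \<times> real \<Rightarrow> real"
  assumes segment: "{0..u} \<times> {v} \<subseteq> G" "0 \<le> u"
    and smooth: "smooth_on G r" "smooth_on G \<Omega>" and \<Omega>_pos: "\<forall>p\<in>G. \<Omega> p > 0"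
    and raychaudhuri: "\<forall>p\<in>G. pu (\<lambda>q. pu r q / (\<Omega> q)\<^sup>2) p \<le> 0"
    and "pu r (0, v) < 0"
  shows "pu r (u, v) < 0"
proof -
  define g where "g = (\<lambda>t. pu r (t, v) / (\<Omega> (t, v))\<^sup>2)"
  have "g u \<le> g 0"
  proof (rule DERIV_nonpos_imp_nonincreasing[OF \<open>0 \<le> u\<close>])
    fix s assume "0 \<le> s" "s \<le> u"
    then have sG: "(s, v) \<in> G" using segment by auto
    have "(\<lambda>t. pu r (t, v)) differentiable (at s)" "(\<lambda>t. \<Omega> (t, v)) differentiable (at s)"
      using has_real_derivative_pu[of "pu r" s v] has_real_derivative_pu[of \<Omega> s v]
        smooth_on_differentiable[OF smooth_on_pu[OF smooth(1)] sG]
        smooth_on_differentiable[OF smooth(2) sG]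
      by (auto simp: real_differentiable_def)
    then have "g differentiable (at s)"
      unfolding g_def using \<Omega>_pos sG by (auto intro!: derivative_intros)
    then have "(g has_real_derivative pu (\<lambda>q. pu r q / (\<Omega> q)\<^sup>2) (s, v)) (at s)"
      by (simp add: pu_def g_def DERIV_deriv_iff_real_differentiable)
    then show "\<exists>y. (g has_real_derivative y) (at s) \<and> y \<le> 0"
      using raychaudhuri sG by blast
  qed
  moreover have "(0, v) \<in> G" using segment by auto
  then have "g 0 < 0" using \<open>pu r (0, v) < 0\<close> \<Omega>_pos by (auto simp: g_def intro!: divide_neg_pos)
  ultimately have "g u < 0" by simp
  moreover have "(u, v) \<in> G" using segment by auto
  ultimately show ?thesis using \<Omega>_pos by (simp add: g_def divide_less_0_iff)
qed

lemma pu_neg_on_past_closed_domain: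
  fixes r \<Omega> :: "real \<times> real \<Rightarrow> real"
  assumes "G \<subseteq> Kset u0 v0" and past_closed: "Jminus_set (Kset u0 v0) G \<subseteq> G"
    and "smooth_on G r" "smooth_on G \<Omega>" "\<forall>p\<in>G. \<Omega> p > 0"
    and "\<forall>p\<in>G. pu (\<lambda>q. pu r q / (\<Omega> q)\<^sup>2) p \<le> 0"
    and "\<forall>p\<in>{0} \<times> {v0..}. pu r p < 0"
    and "p \<in> G"
  shows "pu r p < 0"
proof -
  obtain u v where p: "p = (u, v)" "0 \<le> u" "v0 \<le> v"
    using assms(1,8) by (auto simp: Kset_def)
  have "{0..u} \<times> {v} \<subseteq> G"
    using past_closed assms(1,8) p by (force simp: Jminus_set_def Jminus_def Kset_def)
  then show ?thesis
    unfolding p(1) using p assms(3-7) by (intro pu_neg_along_segment[of u v G]) auto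
qed

lemma pu_pv_neg_at_marginally_trapped:
  fixes \<Omega> r Tuu Tuv :: "real \<times> real \<Rightarrow> real"
  assumes diff: "r differentiable (at (u, v))" "pu r differentiable (at (u, v))"
      "pv r differentiable (at (u, v))" "\<Omega> differentiable (at (u, v))"
    and "\<Omega> (u, v) > 0" "r (u, v) \<ge> 0" "pv r (u, v) = 0" "pu r (u, v) < 0"
    and mass_eq: "pu (hawking_mass \<Omega> r) (u, v) =
      2 * (r (u, v))\<^sup>2 / (\<Omega> (u, v))\<^sup>2 * (Tuv (u, v) * pu r (u, v) - Tuu (u, v) * pv r (u, v))"
    and condA: "Tuv (u, v) / (\<Omega> (u, v))\<^sup>2 < 1 / (4 * (r (u, v))\<^sup>2)"
  shows "pu (pv r) (u, v) < 0"
proof -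
  define R Ru b Om T where R_def: "R = r (u, v)" and Ru_def: "Ru = pu r (u, v)"
    and b_def: "b = pu (pv r) (u, v)" and Om_def: "Om = \<Omega> (u, v)" and T_def: "T = Tuv (u, v)"
  have "((\<lambda>s. hawking_mass \<Omega> r (s, v)) has_real_derivative Ru / 2 + 2 * R * Ru * b / Om\<^sup>2) (at u)"
    unfolding hawking_mass_def R_def Ru_def b_def Om_def
    using has_real_derivative_pu[OF diff(1)] has_real_derivative_pu[OF diff(2)]
      has_real_derivative_pu[OF diff(3)] has_real_derivative_pu[OF diff(4)] assms(5,7)
    by (auto intro!: derivative_eq_intros simp: field_simps power2_eq_square)
  then have "Ru / 2 + 2 * R * Ru * b / Om\<^sup>2 = 2 * R\<^sup>2 / Om\<^sup>2 * (T * Ru)"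
    using mass_eq assms(7) by (simp add: pu_def DERIV_imp_deriv R_def Ru_def b_def Om_def T_def)
  then have "Ru * (1/2 + 2 * R * b / Om\<^sup>2 - 2 * R\<^sup>2 * T / Om\<^sup>2) = 0"
    by (simp add: field_simps)
  then have balance: "1/2 + 2 * R * b / Om\<^sup>2 = 2 * R\<^sup>2 * T / Om\<^sup>2"
    using \<open>pu r (u, v) < 0\<close> by (simp add: Ru_def)
  \<comment> \<open>For \<open>R = 0\<close> condition (A) reads \<open>T / Om\<^sup>2 < 0\<close>, since \<open>1 / 0 = 0\<close>.\<close>
  have "2 * R\<^sup>2 * T / Om\<^sup>2 < 1/2"
  proof (cases "R = 0")
    case False
    then have "T / Om\<^sup>2 * (4 * R\<^sup>2) < 1"
      using condA by (simp add: R_def T_def Om_def field_simps)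
    then show ?thesis by (simp add: field_simps)
  qed simp
  then have "2 * R * b / Om\<^sup>2 < 0" using balance by linarith
  then show ?thesis
    using \<open>r (u, v) \<ge> 0\<close> \<open>\<Omega> (u, v) > 0\<close>
    by (simp add: R_def Om_def b_def divide_less_0_iff mult_less_0_iff)
qed

lemma marginally_trapped_point_not_above_regular_rectangle:
  fixes \<Omega> r Tuu Tuv :: "real \<times> real \<Rightarrow> real" and c :: real
  assumes r_smooth: "smooth_on G r" and "smooth_on G \<Omega>" "\<forall>p\<in>G. \<Omega> p > 0" "\<forall>p\<in>G. r p \<ge> 0"
    and pu_r_neg: "\<forall>p\<in>G. pu r p < 0"
    and mass_eq: "\<forall>p\<in>G. pu (hawking_mass \<Omega> r) p =
      2 * (r p)\<^sup>2 / (\<Omega> p)\<^sup>2 * (Tuv p * pu r p - Tuu p * pv r p)"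
    and condA: "\<forall>p\<in>G. pv r p = 0 \<longrightarrow> c \<le> r p \<longrightarrow> Tuv p / (\<Omega> p)\<^sup>2 < 1 / (4 * (r p)\<^sup>2)"
    and "c \<le> r (u1, v1)"
    and below: "{0..u1} \<times> {v1..<v} \<subseteq> {p \<in> G. 0 < pv r p}"
    and uv: "(u, v) \<in> G" "pv r (u, v) = 0" and "0 \<le> u" "u < u1" "v1 < v"
  shows False
proof -
  have "r (u1, v1) \<le> r (u, v)"
  proof (rule le_by_signs_of_partials)
    have "(s, v1) \<in> G" if "s \<in> {u..u1}" for s
    proof -
      have "(s, v1) \<in> {0..u1} \<times> {v1..<v}" using that \<open>0 \<le> u\<close> \<open>v1 < v\<close> by auto
      then show ?thesis using below by blast
    qed
    then show "\<forall>s\<in>{u..u1}. r differentiable (at (s, v1)) \<and> pu r (s, v1) \<le> 0"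
      using smooth_on_differentiable[OF r_smooth] pu_r_neg less_imp_le by blast
    have "(u, t) \<in> G \<and> 0 \<le> pv r (u, t)" if "t \<in> {v1..v}" for t
    proof (cases "t = v")
      case False
      then have "(u, t) \<in> {0..u1} \<times> {v1..<v}" using that \<open>0 \<le> u\<close> \<open>u < u1\<close> by auto
      then have "(u, t) \<in> G" "0 < pv r (u, t)" using below by blast+
      then show ?thesis by simp
    qed (use uv in simp)
    then show "\<forall>t\<in>{v1..v}. r differentiable (at (u, t)) \<and> 0 \<le> pv r (u, t)"
      using smooth_on_differentiable[OF r_smooth] by blast
  qed (use \<open>u < u1\<close> \<open>v1 < v\<close> in auto)
  then have "pu (pv r) (u, v) < 0"
    using assms(2-4) uv pu_r_neg mass_eq condA \<open>c \<le> r (u1, v1)\<close>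
      smooth_on_differentiable[OF r_smooth uv(1)] smooth_on_differentiable[OF assms(2) uv(1)]
      smooth_on_differentiable[OF smooth_on_pu[OF r_smooth] uv(1)]
      smooth_on_differentiable[OF smooth_on_pv[OF r_smooth] uv(1)]
    by (intro pu_pv_neg_at_marginally_trapped[where \<Omega> = \<Omega> and Tuu = Tuu and Tuv = Tuv]) auto
  then obtain s w where "u < s" "s < u1" "v1 < w" "w < v" "pv r (s, w) < 0"
    using neg_below_zero_with_neg_pu[OF smooth_on_pv[OF r_smooth] uv] \<open>u < u1\<close> \<open>v1 < v\<close> by blast
  moreover have "(s, w) \<in> {0..u1} \<times> {v1..<v}" using calculation \<open>0 \<le> u\<close> by auto
  then have "0 < pv r (s, w)" using below by blast
  ultimately show False by simp
qed

theorem proposition4: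
  fixes u0 v0 \<delta> :: real
    and G :: "(real \<times> real) set"
    and \<Omega> r Tuu Tuv Tvv :: "real \<times> real \<Rightarrow> real"
  defines "K \<equiv> Kset u0 v0"
    and "Cin \<equiv> {0..u0} \<times> {v0}"
    and "Cout \<equiv> {0} \<times> {v0..}"
    and "m \<equiv> hawking_mass \<Omega> r"
    and "R \<equiv> {p \<in> G. pv r p > 0 \<and> pu r p < 0}"
    and "A \<equiv> {p \<in> G. pv r p = 0 \<and> pu r p < 0}"
    and "W \<equiv> {p \<in> G. r p \<ge> Sup (r ` ({0} \<times> {v0..})) - \<delta>}"
  assumes u0_pos: "0 < u0" and v0_pos: "0 < v0"
    and G_sub: "G \<subseteq> K"
    and G_open: "openin (top_of_set K) G"
    and G_gh: "globally_hyperbolic G"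
    and G_init: "Cin \<union> Cout \<subseteq> G"
    and Omega_smooth: "smooth_on G \<Omega>" and Omega_pos: "\<forall>p\<in>G. \<Omega> p > 0"
    and r_smooth: "smooth_on G r" and r_nonneg: "\<forall>p\<in>G. r p \<ge> 0"
    and r_pos_init: "\<forall>p\<in>Cin \<union> Cout. r p > 0"
    and T_smooth: "smooth_on G Tuu" "smooth_on G Tuv" "smooth_on G Tvv"
    and eq_ru: "\<forall>p\<in>G. pu (\<lambda>q. pu r q / (\<Omega> q)\<^sup>2) p = - r p * Tuu p / (\<Omega> p)\<^sup>2"
    and eq_rv: "\<forall>p\<in>G. pv (\<lambda>q. pv r q / (\<Omega> q)\<^sup>2) p = - r p * Tvv p / (\<Omega> p)\<^sup>2"
    and eq_mu: "\<forall>p\<in>G. pu m p = 2 * (r p)\<^sup>2 / (\<Omega> p)\<^sup>2 * (Tuv p * pu r p - Tuu p * pv r p)"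
    and eq_mv: "\<forall>p\<in>G. pv m p = 2 * (r p)\<^sup>2 / (\<Omega> p)\<^sup>2 * (Tuv p * pv r p - Tvv p * pu r p)"
    and I: "\<forall>p\<in>G. Tuu p \<ge> 0 \<and> Tuv p \<ge> 0 \<and> Tvv p \<ge> 0"
    and II: "Jminus_set K G \<subseteq> G"
    and III: "bdd_above (r ` Cout)"
    and IV: "\<forall>p\<in>Cout. m p \<ge> 0" "bdd_above (m ` Cout)"
    and V: "\<forall>p\<in>Cout. pu r p < 0"
    and VI: "\<forall>p\<in>Cout. pv r p > 0"
    and VII: "\<forall>p q. p \<in> closure_in K R \<longrightarrow> q \<in> closure_in K R \<inter> Iminus K p \<longrightarrow>
                 Jminus K p \<inter> Jplus K q - {p} \<subseteq> R \<union> A \<longrightarrow> p \<in> R \<union> A"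
    and delta_pos: "\<delta> > 0"
    and condA: "\<forall>p\<in>A \<inter> W. Tuv p / (\<Omega> p)\<^sup>2 < 1 / (4 * (r p)\<^sup>2)"
    and no_asymptotic_MTT:
      "\<not> (\<exists>\<epsilon>>0. \<forall>u. 0 < u \<and> u < \<epsilon> \<longrightarrow> (\<exists>v>v0. (u, v) \<in> A))"
  shows "\<exists>u1 v1. 0 < u1 \<and> u1 \<le> u0 \<and> v0 \<le> v1 \<and> Kset u1 v1 \<subseteq> W \<inter> R"
proof -
  have raychaudhuri: "\<forall>p\<in>G. pu (\<lambda>q. pu r q / (\<Omega> q)\<^sup>2) p \<le> 0"
    using eq_ru I r_nonneg Omega_pos by (auto intro!: divide_nonpos_pos)
  have pu_r_neg: "\<forall>p\<in>G. pu r p < 0"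
    using pu_neg_on_past_closed_domain[OF G_sub[unfolded K_def] II[unfolded K_def]
        r_smooth Omega_smooth Omega_pos raychaudhuri V[unfolded Cout_def]] by blast
  have R_eq: "R = {p \<in> G. 0 < pv r p}" using pu_r_neg by (auto simp: R_def)
  have R_open: "openin (top_of_set K) R"
    unfolding R_eq using G_open smooth_on_continuous_on[OF smooth_on_pv[OF r_smooth]]
    by (rule openin_superlevel_set)
  define S where "S = Sup (r ` Cout)"
  have W_eq: "W = {p \<in> G. S - \<delta> \<le> r p}" by (simp add: W_def S_def Cout_def)
  obtain v1 where v1: "v0 \<le> v1" "S - \<delta> < r (0, v1)"
    using less_cSup_iff[of "r ` Cout" "S - \<delta>"] III delta_pos by (auto simp: S_def Cout_def)
  have "openin (top_of_set K) {p \<in> R. S - \<delta> < r p}"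
    using R_open smooth_on_continuous_on[OF r_smooth]
    by (intro openin_superlevel_set) (auto simp: R_def intro: continuous_on_subset)
  moreover have "(0, v1) \<in> {p \<in> R. S - \<delta> < r p}"
    using v1 G_init V VI by (auto simp: R_def Cout_def)
  ultimately obtain u1 where u1: "0 < u1" "u1 \<le> u0" "{0..u1} \<times> {v1} \<subseteq> {p \<in> R. S - \<delta> < r p}"
    "\<not> (\<exists>v>v0. (u1, v) \<in> A)"
    using openin_segment_near_axis[of u0 v0 _ v1 "\<lambda>u. \<exists>v>v0. (u, v) \<in> A"] u0_pos no_asymptotic_MTT
    unfolding K_def by blast
  moreover have "(u1, v1) \<in> {0..u1} \<times> {v1}" using u1(1) by simp
  ultimately have start: "{0..u1} \<times> {v1} \<subseteq> R" "S - \<delta> < r (u1, v1)" by blast+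
  have rect: "{0..u1} \<times> {v1..} \<subseteq> R"
  proof (rule rectangle_in_regular_region[of u0 v0 R A u1 v1, folded K_def])
    fix u v assume "0 < u" "u \<le> u1" "v1 < v" and below: "{0..u1} \<times> {v1..<v} \<subseteq> R"
    show "(u, v) \<notin> A"
    proof
      assume "(u, v) \<in> A"
      then have "u \<noteq> u1" using u1(4) \<open>v1 < v\<close> v1(1) by auto
      moreover have "\<forall>p\<in>G. pv r p = 0 \<longrightarrow> S - \<delta> \<le> r p \<longrightarrow> Tuv p / (\<Omega> p)\<^sup>2 < 1 / (4 * (r p)\<^sup>2)"
        using condA pu_r_neg by (auto simp: A_def W_eq)
      ultimately show False
        using marginally_trapped_point_not_above_regular_rectangle[of G r \<Omega> Tuv Tuu "S - \<delta>" u1 v1 v u]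
          r_smooth Omega_smooth Omega_pos r_nonneg pu_r_neg eq_mu[unfolded m_def] start(2) below
          \<open>(u, v) \<in> A\<close> \<open>0 < u\<close> \<open>u \<le> u1\<close> \<open>v1 < v\<close>
        by (auto simp: R_eq A_def)
    qed
  next
    show "{0} \<times> {v1..} \<subseteq> R" using G_init V VI v1(1) by (auto simp: R_def Cout_def)
  qed (use R_open VII u1 v1 start in \<open>simp_all add: K_def\<close>)
  have "Kset u1 v1 \<subseteq> W \<inter> R"
  proof clarify
    fix u w assume "(u, w) \<in> Kset u1 v1"
    then have uw: "0 \<le> u" "u \<le> u1" "v1 \<le> w" by (auto simp: Kset_def)
    have "r (u1, v1) \<le> r (u, w)"
    proof (rule le_by_signs_of_partials)
      have "(s, t) \<in> R" if "s \<in> {0..u1}" "v1 \<le> t" for s t using rect that by auto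
      then show "\<forall>s\<in>{u..u1}. r differentiable (at (s, v1)) \<and> pu r (s, v1) \<le> 0"
        "\<forall>t\<in>{v1..w}. r differentiable (at (u, t)) \<and> 0 \<le> pv r (u, t)"
        using uw smooth_on_differentiable[OF r_smooth] by (auto simp: R_def less_imp_le)
    qed (use uw in auto)
    moreover have "(u, w) \<in> R" using rect uw by auto
    ultimately show "(u, w) \<in> W \<inter> R" using start(2) by (auto simp: W_eq R_def)
  qed
  then show ?thesis using u1 v1 by blast
qed

end
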